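(* Consider the two-layer multi-item order fulfillment problem described in the context, with $K\ge 1$ FDCs, fixed costs $f_0,f_1,\dots,f_K\ge 0$, and let $f=\min_{k\in[K]}f_k$. Suppose there are constants $b>a>0$ such that all variable costs satisfy $a\le c_{k,t}^i\le b$. For a threshold $\theta\ge 0$, let \textsc{Order-Size F-Priority} be the Gated Priority-based Greedy policy that uses, for every item $i$, the priority ranking $\prec_{\mathrm F}$ on $\{0,1,\dots,K\}$ defined by $k\prec_{\mathrm F}j \iff f_k<f_j$ or ($f_k=f_j$ and $k<j$), and the gating condition $G=\mathbb{I}\big(\sum_{i=1}^n S_t^i>\theta\big)$. Then \[\mathfrak{R}(\textsc{Order-Size F-Priority})\le \max\left\{\theta,\ \frac{f_0+b\theta}{f+a\theta},\ \frac{b}{a}\right\}.\] In particular, if $\theta=\sqrt{\frac{f_0}{a}+\frac{(f-b)^2}{4a^2}}-\frac{f-b}{2a}$, then \[\mathfrak{R}(\textsc{Order-Size F-Priority})\le \max\left\{\sqrt{\frac{f_0}{a}+\frac{(f-b)^2}{4a^2}}-\frac{f-b}{2a},\ \frac{b}{a}\right\}.\]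
   Context: Problem. There are $n$ items indexed by $i\in[n]=\{1,\dots,n\}$, $K$ front distribution centers (FDCs) indexed by $k\in[K]$, and one regional distribution center (RDC) indexed by $k=0$ that has unlimited inventory of every item. FDC $k$ initially holds $I_{k,0}^i\ge 0$ units of item $i$; FDC inventory is never replenished. In each period $t=1,\dots,T$ an order $\boldsymbol S_t=(S_t^i)_{i\in[n]}$ of nonnegative integers arrives. After observing $\boldsymbol S_t$ and the per-unit variable costs $c_{k,t}^i$ ($k=0,\dots,K$, $i\in[n]$), a policy must immediately and irrevocably choose quantities $m_{k,t}^i\ge 0$ with $\sum_{k=0}^K m_{k,t}^i=S_t^i$ for all $i$ and $m_{k,t}^i\le I_{k,t-1}^i$ for all $k\in[K]$, where $I_{k,t}^i=I_{k,0}^i-\sum_{\tau=1}^t m_{k,\tau}^i$. The cost of period $t$ is $\sum_{k=0}^K\big[f_k\,\mathbb{I}(\sum_{i=1}^n m_{k,t}^i>0)+\sum_{i=1}^n c_{k,t}^i m_{k,t}^i\big]$ (fixed costs $f_k$ are given); the total cost is the sum over all periods. An online policy (possibly randomized) chooses the period-$t$ quantities using only the fixed costs, initial inventories, and the orders and variable costs of periods $1,\dots,t$. An instance $I$ consists of $n,T$, the initial inventories, variable costs and orders; $\mathrm{ALG}(I)$ is the (expected) total cost of the policy and $\mathrm{OPT}(I)$ is the minimum total cost of a feasible plan chosen with full knowledge of the instance. The competitive ratio is $\mathfrak R(\mathrm{ALG})=\sup \mathrm{ALG}(I)/\mathrm{OPT}(I)$, the supremum over all $n,T$, all initial inventories,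 all variable costs $c_{k,t}^i\in[a,b]$ and all order sequences. Gated Priority-based Greedy policy: given for each item $i$ a total order $\prec_i$ on $\{0,1,\dots,K\}$ and a Boolean gating condition $G$ (a function of the fixed costs, current variable costs, current order and greedy plan), in each period $t$ it computes the greedy plan $\hat m_{k,t}^i=\min\big\{\big(S_t^i-\sum_{k'\in[K]:k'\prec_i k}I_{k',t-1}^i\big)^+,\ I_{k,t-1}^i\big\}\cdot\mathbb{I}(k\prec_i 0)$ for $k\in[K]$ and $\hat m_{0,t}^i=S_t^i-\sum_{k\in[K]}\hat m_{k,t}^i$; if $G=1$ it sets $m_{0,t}^i=S_t^i$ and $m_{k,t}^i=0$ for $k\in[K]$ (whole order to the RDC), otherwise $m_{k,t}^i=\hat m_{k,t}^i$ for all $k,i$; then it updates inventories. *)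

theory Defs
  imports "HOL-Analysis.Analysis"
begin

text \<open>Items are indexed by 1..n, periods by 1..T, FDCs by 1..K, the RDC is 0.
  An instance fixes n, T, initial FDC inventories inv0 k i, variable costs
  vcost k t i and orders order t i.  K and the fixed costs f k (k = 0..K)
  are problem data, not part of the instance.\<close>

record fulfil_inst =
  n_items :: nat
  horizon :: nat
  inv0    :: "nat \<Rightarrow> nat \<Rightarrow> nat"
  vcost   :: "nat \<Rightarrow> nat \<Rightarrow> nat \<Rightarrow> real"
  order   :: "nat \<Rightarrow> nat \<Rightarrow> nat"

definition valid_instance :: "nat \<Rightarrow> real \<Rightarrow> real \<Rightarrow> fulfil_inst \<Rightarrow> bool" where
  "valid_instance K a b I \<longleftrightarrow>
     (\<forall>k\<le>K. \<forall>t\<in>{1..horizon I}. \<forall>i\<in>{1..n_items I}.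
        a \<le> vcost I k t i \<and> vcost I k t i \<le> b)"

text \<open>A plan m k t i (quantity of item i shipped from node k in period t).\<close>
definition feasible_plan :: "nat \<Rightarrow> fulfil_inst \<Rightarrow> (nat \<Rightarrow> nat \<Rightarrow> nat \<Rightarrow> nat) \<Rightarrow> bool" where
  "feasible_plan K I m \<longleftrightarrow>
     (\<forall>t\<in>{1..horizon I}. \<forall>i\<in>{1..n_items I}. (\<Sum>k=0..K. m k t i) = order I t i) \<and>
     (\<forall>k\<in>{1..K}. \<forall>t\<in>{1..horizon I}. \<forall>i\<in>{1..n_items I}.
        int (m k t i) \<le> int (inv0 I k i) - (\<Sum>\<tau>=1..<t. int (m k \<tau> i)))"

definition plan_cost :: "nat \<Rightarrow> (nat \<Rightarrow> real) \<Rightarrow> fulfil_inst \<Rightarrow> (nat \<Rightarrow> nat \<Rightarrow> nat \<Rightarrow> nat) \<Rightarrow> real" where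
  "plan_cost K f I m =
     (\<Sum>t=1..horizon I. \<Sum>k=0..K.
        f k * (if (\<Sum>i=1..n_items I. m k t i) > 0 then 1 else 0)
        + (\<Sum>i=1..n_items I. vcost I k t i * real (m k t i)))"

definition OPT :: "nat \<Rightarrow> (nat \<Rightarrow> real) \<Rightarrow> fulfil_inst \<Rightarrow> real" where
  "OPT K f I = Inf {plan_cost K f I m | m. feasible_plan K I m}"

definition prec_F :: "(nat \<Rightarrow> real) \<Rightarrow> nat \<Rightarrow> nat \<Rightarrow> bool" where
  "prec_F f k j \<longleftrightarrow> f k < f j \<or> (f k = f j \<and> k < j)"

definition greedy_fdc :: "nat \<Rightarrow> (nat \<Rightarrow> real) \<Rightarrow> (nat \<Rightarrow> nat \<Rightarrow> nat) \<Rightarrow> (nat \<Rightarrow> nat) \<Rightarrow> nat \<Rightarrow> nat \<Rightarrow> nat" where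
  "greedy_fdc K f stock S k i =
     (if prec_F f k 0 then
        min (nat (int (S i) - (\<Sum>k'\<in>{k'\<in>{1..K}. prec_F f k' k}. int (stock k' i)))) (stock k i)
      else 0)"

definition os_decision :: "nat \<Rightarrow> (nat \<Rightarrow> real) \<Rightarrow> real \<Rightarrow> nat \<Rightarrow> (nat \<Rightarrow> nat \<Rightarrow> nat) \<Rightarrow> (nat \<Rightarrow> nat) \<Rightarrow> nat \<Rightarrow> nat \<Rightarrow> nat" where
  "os_decision K f \<theta> n stock S k i =
     (if real (\<Sum>i'=1..n. S i') > \<theta> then (if k = 0 then S i else 0)
      else if k = 0 then S i - (\<Sum>k'=1..K. greedy_fdc K f stock S k' i)
      else greedy_fdc K f stock S k i)"

primrec os_state :: "nat \<Rightarrow> (nat \<Rightarrow> real) \<Rightarrow> real \<Rightarrow> fulfil_inst \<Rightarrow> nat \<Rightarrow> nat \<Rightarrow> nat \<Rightarrow> nat" where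
  "os_state K f \<theta> I 0 = inv0 I"
| "os_state K f \<theta> I (Suc t) =
     (\<lambda>k i. if k = 0 then os_state K f \<theta> I t k i
            else os_state K f \<theta> I t k i
                 - os_decision K f \<theta> (n_items I) (os_state K f \<theta> I t) (order I (Suc t)) k i)"

definition os_plan :: "nat \<Rightarrow> (nat \<Rightarrow> real) \<Rightarrow> real \<Rightarrow> fulfil_inst \<Rightarrow> nat \<Rightarrow> nat \<Rightarrow> nat \<Rightarrow> nat" where
  "os_plan K f \<theta> I k t i =
     os_decision K f \<theta> (n_items I) (os_state K f \<theta> I (t - 1)) (order I t) k i"

definition ALG_os :: "nat \<Rightarrow> (nat \<Rightarrow> real) \<Rightarrow> real \<Rightarrow> fulfil_inst \<Rightarrow> real" where
  "ALG_os K f \<theta> I = plan_cost K f I (os_plan K f \<theta> I)"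

text \<open>Competitive ratio: supremum of ALG/OPT over admissible instances with OPT > 0
  (in the extended reals, so an unbounded ratio is \<infinity>).\<close>
definition comp_ratio_os :: "nat \<Rightarrow> (nat \<Rightarrow> real) \<Rightarrow> real \<Rightarrow> real \<Rightarrow> real \<Rightarrow> ereal" where
  "comp_ratio_os K f a b \<theta> =
     (SUP I\<in>{I. valid_instance K a b I \<and> OPT K f I > 0}. ereal (ALG_os K f \<theta> I / OPT K f I))"

end

theory Submission
  imports Defs
begin

text \<open>Split the periods by the gate. In a large period (more than \<open>\<theta>\<close> units) the
  policy pays at most \<open>f 0 + b s\<close>, while any plan pays at least \<open>f j + a s\<close> for some node
  \<open>j\<close> it opens, and \<open>f j\<close> is at least \<open>f 0\<close> or \<open>f = Min (f ` {1..K})\<close>; this gives the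
  terms \<open>(f 0 + b \<theta>)/(f + a \<theta>)\<close> and \<open>b/a\<close>. In the small periods variable costs compare
  by \<open>b/a\<close>, and fixed costs by \<open>\<theta>\<close> through a layer-cake argument: for every level \<open>x\<close>,
  the greedy rule ships at least as many units as any feasible plan from the FDCs with
  \<open>f k \<le> x\<close>, hence at most as many from the nodes with \<open>f j > x\<close>. Each such node it opens
  ships a unit, while a small period of the plan ships at most \<open>\<theta>\<close> units, and only if
  its fixed cost exceeds \<open>x\<close>.\<close>

lemma prec_F_irrefl: "\<not> prec_F f k k"
  by (auto simp: prec_F_def)

lemma prec_F_trans: "prec_F f k j \<Longrightarrow> prec_F f j l \<Longrightarrow> prec_F f k l"
  by (auto simp: prec_F_def)

lemma prec_F_total: "k \<noteq> j \<Longrightarrow> prec_F f k j \<or> prec_F f j k"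
  by (auto simp: prec_F_def)

lemma prec_F_imp_le: "prec_F f k j \<Longrightarrow> f k \<le> f j"
  by (auto simp: prec_F_def)

lemma less_imp_prec_F: "f k < f j \<Longrightarrow> prec_F f k j"
  by (auto simp: prec_F_def)

lemma card_atLeastLessThan_inter_lessThan:
  "card ({A..<A + s} \<inter> {..<S}) = min s (S - A)" for A s S :: nat
proof -
  have "{A..<A + s} \<inter> {..<S} = {A..<min (A + s) S}" by auto
  then show ?thesis by simp
qed

lemma prefix_blocks_partition:
  fixes s :: "'a \<Rightarrow> nat" and r :: "'a \<Rightarrow> 'a \<Rightarrow> bool"
  assumes fin: "finite P"
    and irrefl: "\<And>k. k \<in> P \<Longrightarrow> \<not> r k k"
    and trans: "\<And>j k l. j \<in> P \<Longrightarrow> k \<in> P \<Longrightarrow> l \<in> P \<Longrightarrow> r j k \<Longrightarrow> r k l \<Longrightarrow> r j l"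
    and total: "\<And>j k. j \<in> P \<Longrightarrow> k \<in> P \<Longrightarrow> j \<noteq> k \<Longrightarrow> r j k \<or> r k j"
  defines "A \<equiv> \<lambda>k. \<Sum>k'\<in>{k'\<in>P. r k' k}. s k'"
  shows "disjoint_family_on (\<lambda>k. {A k..<A k + s k}) P"
    and "(\<Union>k\<in>P. {A k..<A k + s k}) = {..<\<Sum>k\<in>P. s k}"
proof -
  have insert_eq: "A k + s k = (\<Sum>k'\<in>insert k {k'\<in>P. r k' k}. s k')" if "k \<in> P" for k
    using fin irrefl[OF that] by (simp add: A_def)
  have below: "A j + s j \<le> A k" if "j \<in> P" "k \<in> P" "r j k" for j k
  proof -
    have "insert j {k'\<in>P. r k' j} \<subseteq> {k'\<in>P. r k' k}"
      using that trans by blast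
    then have "(\<Sum>k'\<in>insert j {k'\<in>P. r k' j}. s k') \<le> A k"
      unfolding A_def by (intro sum_mono2) (use fin in auto)
    then show ?thesis using insert_eq[OF \<open>j \<in> P\<close>] by simp
  qed
  have top: "A k + s k \<le> (\<Sum>k\<in>P. s k)" if "k \<in> P" for k
    unfolding insert_eq[OF that] by (intro sum_mono2) (use fin that in auto)
  have apart: "{A j..<A j + s j} \<inter> {A k..<A k + s k} = {}" if "j \<in> P" "k \<in> P" "r j k" for j k
    using below[OF that] by auto
  show disj: "disjoint_family_on (\<lambda>k. {A k..<A k + s k}) P"
    unfolding disjoint_family_on_def
  proof (intro ballI impI)
    fix j k assume "j \<in> P" "k \<in> P" "j \<noteq> k"
    then consider "r j k" | "r k j" using total by blast
    then show "{A j..<A j + s j} \<inter> {A k..<A k + s k} = {}"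
      by cases (use apart \<open>j \<in> P\<close> \<open>k \<in> P\<close> in \<open>blast, metis Int_commute\<close>)
  qed
  show "(\<Union>k\<in>P. {A k..<A k + s k}) = {..<\<Sum>k\<in>P. s k}"
  proof (rule card_subset_eq)
    show "(\<Union>k\<in>P. {A k..<A k + s k}) \<subseteq> {..<\<Sum>k\<in>P. s k}"
      using top by fastforce
    have "card (\<Union>k\<in>P. {A k..<A k + s k}) = (\<Sum>k\<in>P. card {A k..<A k + s k})"
      using disj fin by (intro card_UN_disjoint) (auto simp: disjoint_family_on_def)
    then show "card (\<Union>k\<in>P. {A k..<A k + s k}) = card {..<\<Sum>k\<in>P. s k}"
      by simp
  qed simp
qed

text \<open>Numbering the units of the order \<open>0, 1, \<dots>\<close>, FDC \<open>k\<close> serves exactly those that fall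
  into its block of \<open>prefix_blocks_partition\<close>.\<close>

lemma sum_greedy_fdc_downset:
  assumes sub: "P \<subseteq> {1..K}" and before_rdc: "\<forall>k\<in>P. prec_F f k 0"
    and downset: "\<forall>k\<in>P. \<forall>k'\<in>{1..K}. prec_F f k' k \<longrightarrow> k' \<in> P"
  shows "(\<Sum>k\<in>P. greedy_fdc K f stock S k i) = min (S i) (\<Sum>k\<in>P. stock k i)"
proof -
  define A where "A = (\<lambda>k. \<Sum>k'\<in>{k'\<in>P. prec_F f k' k}. stock k' i)"
  define block where "block k = {A k..<A k + stock k i}" for k
  have fin: "finite P" using sub finite_subset by blast
  have blocks: "disjoint_family_on block P" "(\<Union>k\<in>P. block k) = {..<\<Sum>k\<in>P. stock k i}"
    unfolding block_def A_def
    by (intro prefix_blocks_partition fin; use prec_F_irrefl prec_F_trans prec_F_total in blast)+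
  have predecessors: "{k'\<in>{1..K}. prec_F f k' k} = {k'\<in>P. prec_F f k' k}" if "k \<in> P" for k
    using that sub downset by blast
  have greedy: "greedy_fdc K f stock S k i = card (block k \<inter> {..<S i})" if "k \<in> P" for k
  proof -
    have pred_sum: "(\<Sum>k'\<in>{k'\<in>{1..K}. prec_F f k' k}. int (stock k' i)) = int (A k)"
      unfolding predecessors[OF that] A_def by simp
    have "prec_F f k 0" using that before_rdc by blast
    then have "greedy_fdc K f stock S k i = min (nat (int (S i) - int (A k))) (stock k i)"
      by (simp only: greedy_fdc_def pred_sum if_True)
    also have "nat (int (S i) - int (A k)) = S i - A k" by simp
    finally show ?thesis
      unfolding block_def card_atLeastLessThan_inter_lessThan by (simp only: min.commute)
  qed
  have apart: "\<forall>j\<in>P. \<forall>k\<in>P. j \<noteq> k \<longrightarrow> (block j \<inter> {..<S i}) \<inter> (block k \<inter> {..<S i}) = {}"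
    using blocks(1) unfolding disjoint_family_on_def block_def by blast
  have "(\<Sum>k\<in>P. greedy_fdc K f stock S k i) = (\<Sum>k\<in>P. card (block k \<inter> {..<S i}))"
    using greedy by simp
  also have "\<dots> = card (\<Union>k\<in>P. block k \<inter> {..<S i})"
    using fin apart by (intro card_UN_disjoint[symmetric]) simp_all
  also have "(\<Union>k\<in>P. block k \<inter> {..<S i}) = {..<\<Sum>k\<in>P. stock k i} \<inter> {..<S i}"
    unfolding blocks(2)[symmetric] block_def by blast
  also have "\<dots> = {..<min (S i) (\<Sum>k\<in>P. stock k i)}" by auto
  finally show ?thesis by simp
qed

lemma greedy_fdc_le_stock: "greedy_fdc K f stock S k i \<le> stock k i"
  by (simp add: greedy_fdc_def)

lemma greedy_fdc_after_rdc: "\<not> prec_F f k 0 \<Longrightarrow> greedy_fdc K f stock S k i = 0"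
  by (simp add: greedy_fdc_def)

lemma sum_greedy_fdc_le_order: "(\<Sum>k=1..K. greedy_fdc K f stock S k i) \<le> S i"
proof -
  let ?P = "{k\<in>{1..K}. prec_F f k 0}"
  have "(\<Sum>k=1..K. greedy_fdc K f stock S k i) = (\<Sum>k\<in>?P. greedy_fdc K f stock S k i)"
    by (rule sum.mono_neutral_right) (auto simp: greedy_fdc_after_rdc)
  also have "\<dots> = min (S i) (\<Sum>k\<in>?P. stock k i)"
    by (rule sum_greedy_fdc_downset) (auto intro: prec_F_trans)
  finally show ?thesis by simp
qed

lemma os_decision_large:
  "\<theta> < real (\<Sum>i'=1..n. S i') \<Longrightarrow> os_decision K f \<theta> n stock S k i = (if k = 0 then S i else 0)"
  by (simp add: os_decision_def)

lemma os_decision_small_fdc: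
  "\<not> \<theta> < real (\<Sum>i'=1..n. S i') \<Longrightarrow> k \<noteq> 0 \<Longrightarrow>
    os_decision K f \<theta> n stock S k i = greedy_fdc K f stock S k i"
  by (simp add: os_decision_def)

lemma os_decision_fdc_le_stock: "k \<noteq> 0 \<Longrightarrow> os_decision K f \<theta> n stock S k i \<le> stock k i"
  by (simp add: os_decision_def greedy_fdc_le_stock)

lemma os_decision_small_dear_fdc:
  "\<not> \<theta> < real (\<Sum>i'=1..n. S i') \<Longrightarrow> k \<noteq> 0 \<Longrightarrow> f 0 \<le> f k \<Longrightarrow>
    os_decision K f \<theta> n stock S k i = 0"
  by (simp add: os_decision_def greedy_fdc_after_rdc prec_F_def)

lemma sum_os_decision: "(\<Sum>k=0..K. os_decision K f \<theta> n stock S k i) = S i"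
proof (cases "\<theta> < real (\<Sum>i'=1..n. S i')")
  case True
  then show ?thesis by (simp add: os_decision_large sum.atLeast_Suc_atMost)
next
  case False
  have "(\<Sum>k=1..K. os_decision K f \<theta> n stock S k i) = (\<Sum>k=1..K. greedy_fdc K f stock S k i)"
    using False by (intro sum.cong) (auto simp: os_decision_small_fdc)
  then show ?thesis
    using False sum_greedy_fdc_le_order[of K f stock S i]
    by (simp add: sum.atLeast_Suc_atMost os_decision_def)
qed

lemma sum_os_decision_cheap:
  assumes "\<not> \<theta> < real (\<Sum>i'=1..n. S i')" and "x < f 0"
  shows "(\<Sum>k\<in>{k\<in>{1..K}. f k \<le> x}. os_decision K f \<theta> n stock S k i)
       = min (S i) (\<Sum>k\<in>{k\<in>{1..K}. f k \<le> x}. stock k i)"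
proof -
  have "(\<Sum>k\<in>{k\<in>{1..K}. f k \<le> x}. os_decision K f \<theta> n stock S k i)
      = (\<Sum>k\<in>{k\<in>{1..K}. f k \<le> x}. greedy_fdc K f stock S k i)"
    using assms by (intro sum.cong) (auto simp: os_decision_small_fdc)
  also have "\<dots> = min (S i) (\<Sum>k\<in>{k\<in>{1..K}. f k \<le> x}. stock k i)"
    by (rule sum_greedy_fdc_downset) (use assms in \<open>auto intro: less_imp_prec_F dest: prec_F_imp_le\<close>)
  finally show ?thesis .
qed

lemma has_integral_of_bool_less:
  assumes "0 \<le> c" "c \<le> M"
  shows "((\<lambda>x. of_bool (x < c) :: real) has_integral c) {0..M}"
proof -
  have "((\<lambda>x. 1::real) has_integral c) {0..c}"
    using has_integral_const_real[of "1::real" 0 c] assms by simp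
  then have "((\<lambda>x. if x \<in> {0..c} then 1 else 0::real) has_integral c) {0..M}"
    using assms by (subst has_integral_restrict) auto
  then show ?thesis
    by (rule has_integral_spike_finite[of "{c}", rotated 2]) auto
qed

text \<open>Both sums are integrals over the level \<open>x\<close> of the number of terms exceeding \<open>x\<close>.\<close>

lemma layer_cake_sum_le:
  fixes p :: "'a \<Rightarrow> real" and q :: "'b \<Rightarrow> real"
  assumes fin: "finite A" "finite B" and nonneg: "\<forall>a\<in>A. 0 \<le> p a" "\<forall>b\<in>B. 0 \<le> q b"
    and levels: "\<And>x. 0 \<le> x \<Longrightarrow> real (card {a\<in>A. x < p a}) \<le> c * real (card {b\<in>B. x < q b})"
  shows "(\<Sum>a\<in>A. p a) \<le> c * (\<Sum>b\<in>B. q b)"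
proof -
  define M where "M = (\<Sum>a\<in>A. p a) + (\<Sum>b\<in>B. q b)"
  have "p a \<le> M" if "a \<in> A" for a
    using member_le_sum[of a A p] that nonneg fin sum_nonneg[of B q] unfolding M_def by auto
  then have p_int: "((\<lambda>x. \<Sum>a\<in>A. of_bool (x < p a)) has_integral (\<Sum>a\<in>A. p a)) {0..M}"
    using nonneg by (intro has_integral_sum has_integral_of_bool_less fin) auto
  have "q b \<le> M" if "b \<in> B" for b
    using member_le_sum[of b B q] that nonneg fin sum_nonneg[of A p] unfolding M_def by auto
  then have q_int: "((\<lambda>x. c * (\<Sum>b\<in>B. of_bool (x < q b))) has_integral (c * (\<Sum>b\<in>B. q b))) {0..M}"
    using nonneg by (intro has_integral_mult_right has_integral_sum has_integral_of_bool_less fin) auto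
  show ?thesis
    by (rule has_integral_le[OF p_int q_int]) (use levels fin in \<open>auto simp: Int_def conj_commute\<close>)
qed

lemma card_positive_le_sum:
  "finite J \<Longrightarrow> card {j\<in>J. 0 < g j} \<le> (\<Sum>j\<in>J. g j)" for g :: "'a \<Rightarrow> nat"
proof -
  assume fin: "finite J"
  have "card {j\<in>J. 0 < g j} = (\<Sum>j\<in>{j\<in>J. 0 < g j}. 1)" by simp
  also have "\<dots> \<le> (\<Sum>j\<in>{j\<in>J. 0 < g j}. g j)" by (rule sum_mono) auto
  also have "\<dots> \<le> (\<Sum>j\<in>J. g j)" by (rule sum_mono2) (use fin in auto)
  finally show ?thesis .
qed

definition fixed_cost :: "nat \<Rightarrow> (nat \<Rightarrow> real) \<Rightarrow> nat \<Rightarrow> (nat \<Rightarrow> nat \<Rightarrow> nat \<Rightarrow> nat) \<Rightarrow> nat \<Rightarrow> real" where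
  "fixed_cost K f n m t = (\<Sum>k=0..K. f k * (if (\<Sum>i=1..n. m k t i) > 0 then 1 else 0))"

definition variable_cost :: "nat \<Rightarrow> fulfil_inst \<Rightarrow> (nat \<Rightarrow> nat \<Rightarrow> nat \<Rightarrow> nat) \<Rightarrow> nat \<Rightarrow> real" where
  "variable_cost K I m t = (\<Sum>k=0..K. \<Sum>i=1..n_items I. vcost I k t i * real (m k t i))"

lemma plan_cost_eq_sum_fixed_variable:
  "plan_cost K f I m = (\<Sum>t=1..horizon I. fixed_cost K f (n_items I) m t + variable_cost K I m t)"
  unfolding plan_cost_def fixed_cost_def variable_cost_def by (simp add: sum.distrib)

lemma fixed_cost_eq_sum_opened:
  "fixed_cost K f n m t = (\<Sum>j\<in>{j\<in>{0..K}. 0 < (\<Sum>i=1..n. m j t i)}. f j)"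
proof -
  have "fixed_cost K f n m t = (\<Sum>j=0..K. if 0 < (\<Sum>i=1..n. m j t i) then f j else 0)"
    unfolding fixed_cost_def by (intro sum.cong) auto
  also have "\<dots> = (\<Sum>j\<in>{j\<in>{0..K}. 0 < (\<Sum>i=1..n. m j t i)}. f j)"
    by (rule sum.inter_filter[symmetric]) simp
  finally show ?thesis .
qed

lemma fixed_cost_nonneg: "\<forall>k\<le>K. 0 \<le> f k \<Longrightarrow> 0 \<le> fixed_cost K f n m t"
  unfolding fixed_cost_eq_sum_opened by (intro sum_nonneg) auto

lemma fixed_cost_ge_opened:
  assumes "\<forall>k\<le>K. 0 \<le> f k" and "j \<le> K" and "0 < (\<Sum>i=1..n. m j t i)"
  shows "f j \<le> fixed_cost K f n m t"
  unfolding fixed_cost_eq_sum_opened using assms by (intro member_le_sum) auto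

lemma variable_cost_bounds:
  assumes valid: "valid_instance K a b I" and t: "t \<in> {1..horizon I}"
    and serves: "\<forall>i\<in>{1..n_items I}. (\<Sum>k=0..K. m k t i) = order I t i"
  shows "a * real (\<Sum>i=1..n_items I. order I t i) \<le> variable_cost K I m t"
    and "variable_cost K I m t \<le> b * real (\<Sum>i=1..n_items I. order I t i)"
proof -
  have cost: "a \<le> vcost I k t i \<and> vcost I k t i \<le> b" if "k \<in> {0..K}" "i \<in> {1..n_items I}" for k i
    using valid t that unfolding valid_instance_def by auto
  have flat: "(\<Sum>k=0..K. \<Sum>i=1..n_items I. c * real (m k t i))
      = c * real (\<Sum>i=1..n_items I. order I t i)" for c
  proof -
    have "(\<Sum>k=0..K. \<Sum>i=1..n_items I. c * real (m k t i))
        = c * (\<Sum>i=1..n_items I. real (\<Sum>k=0..K. m k t i))"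
      by (simp add: sum_distrib_left sum.swap[of _ "{0..K}"])
    then show ?thesis using serves by simp
  qed
  have "(\<Sum>k=0..K. \<Sum>i=1..n_items I. a * real (m k t i)) \<le> variable_cost K I m t"
    unfolding variable_cost_def by (intro sum_mono mult_right_mono) (use cost in auto)
  then show "a * real (\<Sum>i=1..n_items I. order I t i) \<le> variable_cost K I m t"
    by (simp only: flat)
  have "variable_cost K I m t \<le> (\<Sum>k=0..K. \<Sum>i=1..n_items I. b * real (m k t i))"
    unfolding variable_cost_def by (intro sum_mono mult_right_mono) (use cost in auto)
  then show "variable_cost K I m t \<le> b * real (\<Sum>i=1..n_items I. order I t i)"
    by (simp only: flat)
qed

lemma feasible_plan_serves_order:
  "feasible_plan K I m \<Longrightarrow> t \<in> {1..horizon I} \<Longrightarrow> i \<in> {1..n_items I} \<Longrightarrow>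
    (\<Sum>k=0..K. m k t i) = order I t i"
  by (simp add: feasible_plan_def)

lemma feasible_plan_period_total:
  assumes "feasible_plan K I m" and "t \<in> {1..horizon I}"
  shows "(\<Sum>k=0..K. \<Sum>i=1..n_items I. m k t i) = (\<Sum>i=1..n_items I. order I t i)"
proof -
  have "(\<Sum>k=0..K. \<Sum>i=1..n_items I. m k t i) = (\<Sum>i=1..n_items I. \<Sum>k=0..K. m k t i)"
    by (rule sum.swap)
  also have "\<dots> = (\<Sum>i=1..n_items I. order I t i)"
    using assms by (intro sum.cong refl feasible_plan_serves_order)
  finally show ?thesis .
qed

lemma feasible_plan_within_inv0:
  assumes feas: "feasible_plan K I m" and k: "k \<in> {1..K}" and i: "i \<in> {1..n_items I}"
  shows "(\<Sum>\<tau>=1..horizon I. m k \<tau> i) \<le> inv0 I k i"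
proof (cases "horizon I")
  case 0
  then show ?thesis by simp
next
  case (Suc T)
  have "Suc T \<in> {1..horizon I}" using Suc by simp
  then have "int (m k (Suc T) i) \<le> int (inv0 I k i) - (\<Sum>\<tau>=1..<Suc T. int (m k \<tau> i))"
    using feas k i unfolding feasible_plan_def by blast
  then have "(\<Sum>\<tau>=1..<Suc T. m k \<tau> i) + m k (Suc T) i \<le> inv0 I k i"
    by (simp add: of_nat_sum[symmetric] del: of_nat_sum)
  then show ?thesis
    using Suc by (simp add: atLeastLessThanSuc_atLeastAtMost[symmetric] sum.atLeastLessThan_Suc)
qed

lemma feasible_plan_rdc_only: "feasible_plan K I (\<lambda>k t i. if k = 0 then order I t i else 0)"
  unfolding feasible_plan_def by simp

lemma feasible_plan_opens_node:
  assumes "feasible_plan K I m" and "t \<in> {1..horizon I}" and "0 < (\<Sum>i=1..n_items I. order I t i)"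
  obtains j where "j \<le> K" and "0 < (\<Sum>i=1..n_items I. m j t i)"
proof -
  have positive: "0 < (\<Sum>j=0..K. \<Sum>i=1..n_items I. m j t i)"
    by (subst feasible_plan_period_total[OF assms(1,2)]) (rule assms(3))
  have "\<exists>j\<in>{0..K}. 0 < (\<Sum>i=1..n_items I. m j t i)"
  proof (rule ccontr)
    assume none: "\<not> (\<exists>j\<in>{0..K}. 0 < (\<Sum>i=1..n_items I. m j t i))"
    have "(\<Sum>j=0..K. \<Sum>i=1..n_items I. m j t i) = 0"
      by (intro sum.neutral) (use none neq0_conv in blast)
    with positive show False by simp
  qed
  then show ?thesis using that by auto
qed

lemma le_OPT:
  assumes "\<And>m. feasible_plan K I m \<Longrightarrow> c \<le> plan_cost K f I m"
  shows "c \<le> OPT K f I"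
  unfolding OPT_def using assms feasible_plan_rdc_only by (intro cInf_greatest) auto

lemma ALG_div_OPT_le:
  assumes "0 < OPT K f I" and "0 < r"
    and "\<And>m. feasible_plan K I m \<Longrightarrow> ALG_os K f \<theta> I \<le> r * plan_cost K f I m"
  shows "ALG_os K f \<theta> I / OPT K f I \<le> r"
proof -
  have "ALG_os K f \<theta> I / r \<le> OPT K f I"
    using assms(2,3) by (intro le_OPT) (simp add: divide_le_eq mult.commute)
  then show ?thesis using assms(1,2) by (simp add: divide_le_eq mult.commute)
qed

lemma rdc_cost_le_ratio:
  fixes a b \<theta> g s f0 fj :: real
  assumes a: "0 < a" "a < b" and \<theta>: "0 \<le> \<theta>" "\<theta> < s" and g: "0 < g + a * \<theta>"
    and fj: "0 \<le> fj" "f0 \<le> fj \<or> g \<le> fj"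
  shows "f0 + b * s \<le> max \<theta> (max ((f0 + b * \<theta>) / (g + a * \<theta>)) (b / a)) * (fj + a * s)"
proof -
  define R where "R = max \<theta> (max ((f0 + b * \<theta>) / (g + a * \<theta>)) (b / a))"
  have R_ge: "b / a \<le> R" "(f0 + b * \<theta>) / (g + a * \<theta>) \<le> R" unfolding R_def by auto
  have "1 \<le> b / a" using a by simp
  have "f0 + b * s \<le> R * (fj + a * s)"
  proof (cases "f0 \<le> fj")
    case True
    have "f0 + b * s \<le> (b / a) * (fj + a * s)"
      using True a \<open>1 \<le> b / a\<close> fj(1) mult_right_mono[of 1 "b / a" fj] by (simp add: distrib_left)
    also have "\<dots> \<le> R * (fj + a * s)"
      using R_ge(1) fj(1) a \<theta> by (intro mult_right_mono) auto
    finally show ?thesis .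
  next
    case False
    then have "g \<le> fj" using fj(2) by auto
    have "f0 + b * s = (f0 + b * \<theta>) + (b / a) * (a * (s - \<theta>))"
      using a by (simp add: algebra_simps)
    also have "\<dots> \<le> R * (g + a * \<theta>) + R * (a * (s - \<theta>))"
    proof (rule add_mono)
      show "f0 + b * \<theta> \<le> R * (g + a * \<theta>)"
        using R_ge(2) g by (simp add: divide_le_eq)
      show "b / a * (a * (s - \<theta>)) \<le> R * (a * (s - \<theta>))"
        using R_ge(1) a \<theta> by (intro mult_right_mono) auto
    qed
    also have "\<dots> \<le> R * (fj + a * s)"
      using \<open>g \<le> fj\<close> R_ge(1) \<open>1 \<le> b / a\<close> by (simp add: algebra_simps mult_left_mono)
    finally show ?thesis .
  qed
  then show ?thesis unfolding R_def .
qed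

locale os_run =
  fixes K :: nat and f :: "nat \<Rightarrow> real" and \<theta> :: real and I :: fulfil_inst
  assumes f_nonneg: "\<forall>k\<le>K. 0 \<le> f k" and \<theta>_nonneg: "0 \<le> \<theta>"
begin

abbreviation "n \<equiv> n_items I"
abbreviation "T \<equiv> horizon I"
abbreviation "S \<equiv> order I"
abbreviation "stock \<equiv> os_state K f \<theta> I"
abbreviation "alg \<equiv> os_plan K f \<theta> I"

definition small :: "nat \<Rightarrow> bool" where
  "small t \<longleftrightarrow> \<not> \<theta> < real (\<Sum>i=1..n. S t i)"

abbreviation "small_periods t \<equiv> {\<tau>\<in>{1..t}. small \<tau>}"
abbreviation "cheap x \<equiv> {k\<in>{1..K}. f k \<le> x}"
abbreviation "dear x \<equiv> {j\<in>{0..K}. x < f j}"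

lemma alg_Suc: "alg k (Suc t) i = os_decision K f \<theta> n (stock t) (S (Suc t)) k i"
  by (simp add: os_plan_def)

lemma alg_serves_order: "1 \<le> t \<Longrightarrow> (\<Sum>k=0..K. alg k t i) = S t i"
  by (cases t) (auto simp: alg_Suc sum_os_decision)

lemma alg_large: "1 \<le> t \<Longrightarrow> \<not> small t \<Longrightarrow> alg k t i = (if k = 0 then S t i else 0)"
  by (cases t) (auto simp: alg_Suc os_decision_large small_def)

lemma alg_small_dear_fdc: "1 \<le> t \<Longrightarrow> small t \<Longrightarrow> k \<noteq> 0 \<Longrightarrow> f 0 \<le> f k \<Longrightarrow> alg k t i = 0"
  by (cases t) (auto simp: alg_Suc os_decision_small_dear_fdc small_def)

lemma stock_conservation: "k \<noteq> 0 \<Longrightarrow> (\<Sum>\<tau>=1..t. alg k \<tau> i) + stock t k i = inv0 I k i"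
proof (induction t)
  case 0
  then show ?case by simp
next
  case (Suc t)
  have "alg k (Suc t) i \<le> stock t k i"
    using Suc.prems by (simp add: alg_Suc os_decision_fdc_le_stock)
  moreover have "stock (Suc t) k i = stock t k i - alg k (Suc t) i"
    using Suc.prems by (simp add: alg_Suc)
  ultimately show ?case
    using Suc by simp
qed

lemma cheap_stock_conservation:
  "(\<Sum>\<tau>\<in>small_periods t. \<Sum>k\<in>cheap x. alg k \<tau> i) + (\<Sum>k\<in>cheap x. stock t k i)
    = (\<Sum>k\<in>cheap x. inv0 I k i)"
proof -
  have "(\<Sum>\<tau>\<in>small_periods t. \<Sum>k\<in>cheap x. alg k \<tau> i)
      = (\<Sum>k\<in>cheap x. \<Sum>\<tau>\<in>small_periods t. alg k \<tau> i)"
    by (rule sum.swap)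
  also have "\<dots> = (\<Sum>k\<in>cheap x. \<Sum>\<tau>=1..t. alg k \<tau> i)"
    by (intro sum.cong refl sum.mono_neutral_left) (auto simp: alg_large)
  finally have "(\<Sum>\<tau>\<in>small_periods t. \<Sum>k\<in>cheap x. alg k \<tau> i) + (\<Sum>k\<in>cheap x. stock t k i)
      = (\<Sum>k\<in>cheap x. (\<Sum>\<tau>=1..t. alg k \<tau> i) + stock t k i)"
    by (simp add: sum.distrib)
  also have "\<dots> = (\<Sum>k\<in>cheap x. inv0 I k i)"
    by (intro sum.cong refl stock_conservation) auto
  finally show ?thesis .
qed

text \<open>The greedy rule serves the current order from the cheap FDCs as far as their
  stock allows, so it has shipped from them at least as much as any feasible plan,
  until they run dry.\<close>

lemma cheap_shipments_invariant:
  assumes feas: "feasible_plan K I m" and x: "x < f 0" and i: "i \<in> {1..n}"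
  shows "t \<le> T \<Longrightarrow> min (\<Sum>k\<in>cheap x. inv0 I k i) (\<Sum>\<tau>\<in>small_periods t. \<Sum>k\<in>cheap x. m k \<tau> i)
    \<le> (\<Sum>\<tau>\<in>small_periods t. \<Sum>k\<in>cheap x. alg k \<tau> i)"
proof (induction t)
  case 0
  then show ?case by simp
next
  case (Suc t)
  show ?case
  proof (cases "small (Suc t)")
    case False
    then have "small_periods (Suc t) = small_periods t" by (auto simp: le_Suc_eq)
    then show ?thesis using Suc by simp
  next
    case True
    then have periods: "small_periods (Suc t) = insert (Suc t) (small_periods t)"
      by (auto simp: le_Suc_eq)
    have alg_now: "(\<Sum>k\<in>cheap x. alg k (Suc t) i) = min (S (Suc t) i) (\<Sum>k\<in>cheap x. stock t k i)"
      unfolding alg_Suc using True x by (intro sum_os_decision_cheap) (simp_all add: small_def)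
    have "(\<Sum>k\<in>cheap x. m k (Suc t) i) \<le> (\<Sum>k=0..K. m k (Suc t) i)"
      by (rule sum_mono2) auto
    also have "\<dots> = S (Suc t) i"
      using Suc.prems i by (intro feasible_plan_serves_order[OF feas]) auto
    finally have m_now: "(\<Sum>k\<in>cheap x. m k (Suc t) i) \<le> S (Suc t) i" .
    have step: "min C (v + V) \<le> min s R + U"
      if "min C V \<le> U" "U + R = C" "v \<le> s" for C V U R s v :: nat
      using that unfolding min_def by (auto split: if_splits)
    have "min (\<Sum>k\<in>cheap x. inv0 I k i)
        ((\<Sum>k\<in>cheap x. m k (Suc t) i) + (\<Sum>\<tau>\<in>small_periods t. \<Sum>k\<in>cheap x. m k \<tau> i))
      \<le> min (S (Suc t) i) (\<Sum>k\<in>cheap x. stock t k i)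
        + (\<Sum>\<tau>\<in>small_periods t. \<Sum>k\<in>cheap x. alg k \<tau> i)"
      using Suc by (intro step m_now cheap_stock_conservation) simp
    then show ?thesis
      unfolding periods alg_now[symmetric] by simp
  qed
qed

lemma plan_cheap_shipments_le_alg:
  assumes feas: "feasible_plan K I m" and x: "x < f 0" and i: "i \<in> {1..n}"
  shows "(\<Sum>\<tau>\<in>small_periods T. \<Sum>k\<in>cheap x. m k \<tau> i) \<le> (\<Sum>\<tau>\<in>small_periods T. \<Sum>k\<in>cheap x. alg k \<tau> i)"
proof -
  have "(\<Sum>\<tau>\<in>small_periods T. \<Sum>k\<in>cheap x. m k \<tau> i) \<le> (\<Sum>\<tau>=1..T. \<Sum>k\<in>cheap x. m k \<tau> i)"
    by (rule sum_mono2) auto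
  also have "\<dots> = (\<Sum>k\<in>cheap x. \<Sum>\<tau>=1..T. m k \<tau> i)"
    by (rule sum.swap)
  also have "\<dots> \<le> (\<Sum>k\<in>cheap x. inv0 I k i)"
    using i by (intro sum_mono feasible_plan_within_inv0[OF feas]) auto
  finally show ?thesis
    using cheap_shipments_invariant[OF assms order_refl] by simp
qed

lemma alg_dear_shipments_le_plan:
  assumes feas: "feasible_plan K I m" and i: "i \<in> {1..n}"
  shows "(\<Sum>\<tau>\<in>small_periods T. \<Sum>j\<in>dear x. alg j \<tau> i) \<le> (\<Sum>\<tau>\<in>small_periods T. \<Sum>j\<in>dear x. m j \<tau> i)"
proof (cases "x < f 0")
  case False
  have "alg j \<tau> i = 0" if "\<tau> \<in> small_periods T" "j \<in> dear x" for \<tau> j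
  proof -
    have "j \<noteq> 0"
    proof
      assume "j = 0"
      with that False show False by simp
    qed
    then show ?thesis using that False by (intro alg_small_dear_fdc) auto
  qed
  then have "(\<Sum>\<tau>\<in>small_periods T. \<Sum>j\<in>dear x. alg j \<tau> i) = 0"
    by simp
  then show ?thesis by simp
next
  case True
  have split: "(\<Sum>j=0..K. g j) = (\<Sum>j\<in>dear x. g j) + (\<Sum>j\<in>cheap x. g j)" for g :: "nat \<Rightarrow> nat"
  proof -
    have cover: "{0..K} = dear x \<union> cheap x" using True by (auto simp: not_less Suc_le_eq)
    have "(\<Sum>j\<in>dear x \<union> cheap x. g j) = (\<Sum>j\<in>dear x. g j) + (\<Sum>j\<in>cheap x. g j)"
      by (rule sum.union_disjoint) auto
    then show ?thesis by (simp only: cover[symmetric])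
  qed
  have "(\<Sum>\<tau>\<in>small_periods T. \<Sum>j\<in>dear x. alg j \<tau> i) + (\<Sum>\<tau>\<in>small_periods T. \<Sum>k\<in>cheap x. alg k \<tau> i)
      = (\<Sum>\<tau>\<in>small_periods T. S \<tau> i)"
    unfolding sum.distrib[symmetric] split[symmetric] by (intro sum.cong refl) (simp add: alg_serves_order)
  moreover have "(\<Sum>\<tau>\<in>small_periods T. \<Sum>j\<in>dear x. m j \<tau> i) + (\<Sum>\<tau>\<in>small_periods T. \<Sum>k\<in>cheap x. m k \<tau> i)
      = (\<Sum>\<tau>\<in>small_periods T. S \<tau> i)"
    unfolding sum.distrib[symmetric] split[symmetric]
    using i by (intro sum.cong refl) (simp add: feasible_plan_serves_order[OF feas])
  ultimately show ?thesis
    using plan_cheap_shipments_le_alg[OF feas True i] by linarith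
qed

lemma plan_dear_shipments_le:
  assumes feas: "feasible_plan K I m" and t: "t \<in> small_periods T"
  shows "real (\<Sum>j\<in>dear x. \<Sum>i=1..n. m j t i) \<le> \<theta> * of_bool (x < fixed_cost K f n m t)"
proof (cases "\<exists>j\<in>dear x. 0 < (\<Sum>i=1..n. m j t i)")
  case True
  then obtain j where j: "j \<in> dear x" "0 < (\<Sum>i=1..n. m j t i)" by blast
  then have "f j \<le> fixed_cost K f n m t"
    by (intro fixed_cost_ge_opened[OF f_nonneg]) auto
  with j have opened: "x < fixed_cost K f n m t" by simp
  have "(\<Sum>j\<in>dear x. \<Sum>i=1..n. m j t i) \<le> (\<Sum>j=0..K. \<Sum>i=1..n. m j t i)"
    by (rule sum_mono2) auto
  also have "\<dots> = (\<Sum>i=1..n. S t i)"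
    using t by (intro feasible_plan_period_total[OF feas]) auto
  finally have "real (\<Sum>j\<in>dear x. \<Sum>i=1..n. m j t i) \<le> real (\<Sum>i=1..n. S t i)"
    by (simp only: of_nat_le_iff)
  also have "\<dots> \<le> \<theta>"
    using t by (simp add: small_def)
  finally show ?thesis using opened by simp
next
  case False
  then have "(\<Sum>j\<in>dear x. \<Sum>i=1..n. m j t i) = 0" by (intro sum.neutral) auto
  then show ?thesis using \<theta>_nonneg by simp
qed

lemma alg_dear_openings_le:
  assumes feas: "feasible_plan K I m"
  shows "real (\<Sum>t\<in>small_periods T. card {j\<in>dear x. 0 < (\<Sum>i=1..n. alg j t i)})
    \<le> \<theta> * real (card {t\<in>small_periods T. x < fixed_cost K f n m t})"
proof -
  have swap: "(\<Sum>t\<in>small_periods T. \<Sum>j\<in>dear x. \<Sum>i=1..n. g j t i)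
      = (\<Sum>i=1..n. \<Sum>t\<in>small_periods T. \<Sum>j\<in>dear x. g j t i)" for g :: "nat \<Rightarrow> nat \<Rightarrow> nat \<Rightarrow> nat"
  proof -
    have "(\<Sum>t\<in>small_periods T. \<Sum>j\<in>dear x. \<Sum>i=1..n. g j t i)
        = (\<Sum>t\<in>small_periods T. \<Sum>i=1..n. \<Sum>j\<in>dear x. g j t i)"
      by (rule sum.cong[OF refl], rule sum.swap)
    also have "\<dots> = (\<Sum>i=1..n. \<Sum>t\<in>small_periods T. \<Sum>j\<in>dear x. g j t i)"
      by (rule sum.swap)
    finally show ?thesis .
  qed
  have "(\<Sum>t\<in>small_periods T. card {j\<in>dear x. 0 < (\<Sum>i=1..n. alg j t i)})
      \<le> (\<Sum>t\<in>small_periods T. \<Sum>j\<in>dear x. \<Sum>i=1..n. alg j t i)"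
    by (intro sum_mono card_positive_le_sum) simp
  also have "\<dots> \<le> (\<Sum>t\<in>small_periods T. \<Sum>j\<in>dear x. \<Sum>i=1..n. m j t i)"
    unfolding swap by (intro sum_mono alg_dear_shipments_le_plan[OF feas])
  finally have "real (\<Sum>t\<in>small_periods T. card {j\<in>dear x. 0 < (\<Sum>i=1..n. alg j t i)})
      \<le> (\<Sum>t\<in>small_periods T. real (\<Sum>j\<in>dear x. \<Sum>i=1..n. m j t i))"
    by (simp only: of_nat_le_iff of_nat_sum[symmetric])
  also have "\<dots> \<le> (\<Sum>t\<in>small_periods T. \<theta> * of_bool (x < fixed_cost K f n m t))"
    by (intro sum_mono plan_dear_shipments_le[OF feas])
  also have "\<dots> = \<theta> * real (card {t\<in>small_periods T. x < fixed_cost K f n m t})"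
    by (simp add: sum_distrib_left[symmetric] Int_def)
  finally show ?thesis .
qed

lemma alg_small_fixed_cost_le:
  assumes feas: "feasible_plan K I m"
  shows "(\<Sum>t\<in>small_periods T. fixed_cost K f n alg t) \<le> \<theta> * (\<Sum>t\<in>small_periods T. fixed_cost K f n m t)"
proof -
  define opened where "opened t = {j\<in>{0..K}. 0 < (\<Sum>i=1..n. alg j t i)}" for t
  have "(\<Sum>t\<in>small_periods T. fixed_cost K f n alg t) = (\<Sum>t\<in>small_periods T. \<Sum>j\<in>opened t. f j)"
    by (simp add: fixed_cost_eq_sum_opened opened_def)
  also have "\<dots> = (\<Sum>(t, j)\<in>Sigma (small_periods T) opened. f j)"
    by (rule sum.Sigma) (auto simp: opened_def)
  also have "\<dots> \<le> \<theta> * (\<Sum>t\<in>small_periods T. fixed_cost K f n m t)"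
  proof (rule layer_cake_sum_le)
    show "finite (Sigma (small_periods T) opened)"
      by (intro finite_SigmaI) (simp_all add: opened_def)
    show "\<forall>tj\<in>Sigma (small_periods T) opened. 0 \<le> (case tj of (t, j) \<Rightarrow> f j)"
      using f_nonneg by (auto simp: opened_def)
    show "\<forall>t\<in>small_periods T. 0 \<le> fixed_cost K f n m t"
      using fixed_cost_nonneg[OF f_nonneg] by blast
    fix x :: real
    have level_set: "{tj \<in> Sigma (small_periods T) opened. x < (case tj of (t, j) \<Rightarrow> f j)}
        = Sigma (small_periods T) (\<lambda>t. {j\<in>dear x. 0 < (\<Sum>i=1..n. alg j t i)})"
      by (auto simp: opened_def)
    have "card {tj \<in> Sigma (small_periods T) opened. x < (case tj of (t, j) \<Rightarrow> f j)}
        = (\<Sum>t\<in>small_periods T. card {j\<in>dear x. 0 < (\<Sum>i=1..n. alg j t i)})"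
      unfolding level_set by (rule card_SigmaI) simp_all
    then show "real (card {tj \<in> Sigma (small_periods T) opened. x < (case tj of (t, j) \<Rightarrow> f j)})
        \<le> \<theta> * real (card {t\<in>small_periods T. x < fixed_cost K f n m t})"
      using alg_dear_openings_le[OF feas, of x] by simp
  qed simp
  finally show ?thesis .
qed

end

locale os_bound = os_run +
  fixes a b :: real
  assumes a_pos: "0 < a" and a_less_b: "a < b"
    and denominator_pos: "0 < Min (f ` {1..K}) + a * \<theta>"
    and valid: "valid_instance K a b I"
begin

definition ratio :: real where
  "ratio = max \<theta> (max ((f 0 + b * \<theta>) / (Min (f ` {1..K}) + a * \<theta>)) (b / a))"

lemma b_div_a_le_ratio: "b / a \<le> ratio"
  and \<theta>_le_ratio: "\<theta> \<le> ratio"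
  by (auto simp: ratio_def)

lemma ratio_pos: "0 < ratio"
proof -
  have "0 < b / a" using a_pos a_less_b by simp
  then show ?thesis using b_div_a_le_ratio by linarith
qed

lemma alg_variable_cost_le: "t \<in> {1..T} \<Longrightarrow> variable_cost K I alg t \<le> b * real (\<Sum>i=1..n. S t i)"
  by (intro variable_cost_bounds(2)[OF valid]) (auto simp: alg_serves_order)

lemma plan_variable_cost_ge:
  "feasible_plan K I m \<Longrightarrow> t \<in> {1..T} \<Longrightarrow> a * real (\<Sum>i=1..n. S t i) \<le> variable_cost K I m t"
  by (intro variable_cost_bounds(1)[OF valid]) (auto simp: feasible_plan_serves_order)

lemma alg_variable_cost_le_ratio:
  assumes "feasible_plan K I m" and "t \<in> {1..T}"
  shows "variable_cost K I alg t \<le> ratio * variable_cost K I m t"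
proof -
  have "variable_cost K I alg t \<le> (b / a) * (a * real (\<Sum>i=1..n. S t i))"
    using alg_variable_cost_le[OF assms(2)] a_pos by simp
  also have "\<dots> \<le> ratio * variable_cost K I m t"
    using plan_variable_cost_ge[OF assms] b_div_a_le_ratio ratio_pos a_pos
    by (intro mult_mono) (auto intro!: mult_nonneg_nonneg sum_nonneg)
  finally show ?thesis .
qed

lemma alg_large_period_cost_le:
  assumes feas: "feasible_plan K I m" and t: "t \<in> {1..T}" and large: "\<not> small t"
  shows "fixed_cost K f n alg t + variable_cost K I alg t \<le> ratio * (fixed_cost K f n m t + variable_cost K I m t)"
proof -
  define s where "s = real (\<Sum>i=1..n. S t i)"
  have s: "\<theta> < s" using large unfolding small_def s_def by simp
  then have "0 < (\<Sum>i=1..n. S t i)" using \<theta>_nonneg unfolding s_def by linarith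
  then obtain j where j: "j \<le> K" "0 < (\<Sum>i=1..n. m j t i)"
    by (rule feasible_plan_opens_node[OF feas t])
  have "fixed_cost K f n alg t \<le> f 0"
    using t large f_nonneg by (simp add: fixed_cost_def sum.atLeast_Suc_atMost alg_large)
  then have "fixed_cost K f n alg t + variable_cost K I alg t \<le> f 0 + b * s"
    using alg_variable_cost_le[OF t] unfolding s_def by linarith
  also have "\<dots> \<le> ratio * (f j + a * s)"
    unfolding ratio_def
  proof (rule rdc_cost_le_ratio)
    show "f 0 \<le> f j \<or> Min (f ` {1..K}) \<le> f j"
      using j(1) by (cases "j = 0") auto
  qed (use a_pos a_less_b \<theta>_nonneg s denominator_pos f_nonneg j in auto)
  also have "\<dots> \<le> ratio * (fixed_cost K f n m t + variable_cost K I m t)"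
  proof (intro mult_left_mono add_mono)
    show "f j \<le> fixed_cost K f n m t"
      using j by (intro fixed_cost_ge_opened[OF f_nonneg])
    show "a * s \<le> variable_cost K I m t"
      unfolding s_def by (rule plan_variable_cost_ge[OF feas t])
  qed (use ratio_pos in simp)
  finally show ?thesis .
qed

lemma alg_small_periods_cost_le:
  assumes feas: "feasible_plan K I m"
  shows "(\<Sum>t\<in>small_periods T. fixed_cost K f n alg t + variable_cost K I alg t)
    \<le> ratio * (\<Sum>t\<in>small_periods T. fixed_cost K f n m t + variable_cost K I m t)"
proof -
  have "(\<Sum>t\<in>small_periods T. fixed_cost K f n alg t) \<le> \<theta> * (\<Sum>t\<in>small_periods T. fixed_cost K f n m t)"
    by (rule alg_small_fixed_cost_le[OF feas])
  also have "\<dots> \<le> ratio * (\<Sum>t\<in>small_periods T. fixed_cost K f n m t)"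
    using \<theta>_le_ratio f_nonneg by (intro mult_right_mono sum_nonneg fixed_cost_nonneg) auto
  finally have "(\<Sum>t\<in>small_periods T. fixed_cost K f n alg t) \<le> ratio * (\<Sum>t\<in>small_periods T. fixed_cost K f n m t)" .
  moreover have "(\<Sum>t\<in>small_periods T. variable_cost K I alg t) \<le> (\<Sum>t\<in>small_periods T. ratio * variable_cost K I m t)"
    by (intro sum_mono alg_variable_cost_le_ratio[OF feas]) auto
  ultimately show ?thesis
    by (simp add: sum.distrib sum_distrib_left distrib_left)
qed

lemma alg_cost_le_ratio:
  assumes feas: "feasible_plan K I m"
  shows "ALG_os K f \<theta> I \<le> ratio * plan_cost K f I m"
proof -
  let ?cost = "\<lambda>m t. fixed_cost K f n m t + variable_cost K I m t"
  let ?large = "{t\<in>{1..T}. \<not> small t}"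
  have split: "(\<Sum>t=1..T. g t) = (\<Sum>t\<in>small_periods T. g t) + (\<Sum>t\<in>?large. g t)" for g :: "nat \<Rightarrow> real"
    by (subst sum.union_disjoint[symmetric]) (auto intro: sum.cong)
  have "(\<Sum>t\<in>?large. ?cost alg t) \<le> (\<Sum>t\<in>?large. ratio * ?cost m t)"
    by (intro sum_mono alg_large_period_cost_le[OF feas]) auto
  then show ?thesis
    using alg_small_periods_cost_le[OF feas]
    unfolding ALG_os_def plan_cost_eq_sum_fixed_variable split
    by (simp add: sum_distrib_left distrib_left)
qed

lemma ALG_div_OPT_le_ratio: "0 < OPT K f I \<Longrightarrow> ALG_os K f \<theta> I / OPT K f I \<le> ratio"
  by (rule ALG_div_OPT_le[OF _ ratio_pos alg_cost_le_ratio])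

end

lemma comp_ratio_os_le:
  assumes "\<forall>k\<le>K. 0 \<le> f k" and "0 \<le> \<theta>" and "0 < a" and "a < b"
    and "0 < Min (f ` {1..K}) + a * \<theta>"
  shows "comp_ratio_os K f a b \<theta>
    \<le> ereal (max \<theta> (max ((f 0 + b * \<theta>) / (Min (f ` {1..K}) + a * \<theta>)) (b / a)))"
  unfolding comp_ratio_os_def
proof (rule SUP_least)
  fix I assume "I \<in> {I. valid_instance K a b I \<and> 0 < OPT K f I}"
  then interpret os_bound K f \<theta> I a b
    using assms by unfold_locales auto
  show "ereal (ALG_os K f \<theta> I / OPT K f I)
      \<le> ereal (max \<theta> (max ((f 0 + b * \<theta>) / (Min (f ` {1..K}) + a * \<theta>)) (b / a)))"
    using ALG_div_OPT_le_ratio \<open>I \<in> _\<close> unfolding ratio_def by (simp only: ereal_less_eq(3) mem_Collect_eq)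
qed

text \<open>\<open>\<theta>\<close> is the nonnegative root of \<open>a \<theta>\<^sup>2 + (g - b) \<theta> = f0\<close>, which balances the
  first two terms of the bound.\<close>

lemma balanced_threshold:
  fixes a b g f0 :: real
  assumes a: "0 < a" and b: "0 < b" and g: "0 \<le> g" and f0: "0 \<le> f0"
  defines "\<theta> \<equiv> sqrt (f0 / a + (g - b)\<^sup>2 / (4 * a\<^sup>2)) - (g - b) / (2 * a)"
  shows "0 \<le> \<theta>" and "0 < g + a * \<theta>" and "(f0 + b * \<theta>) / (g + a * \<theta>) = \<theta>"
proof -
  define u where "u = (g - b) / (2 * a)"
  define D where "D = f0 / a + u\<^sup>2"
  have D_eq: "D = f0 / a + (g - b)\<^sup>2 / (4 * a\<^sup>2)"
    unfolding D_def u_def by (simp add: power_divide power_mult_distrib)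
  have \<theta>_eq: "\<theta> = sqrt D - u" unfolding \<theta>_def D_eq u_def ..
  have D: "0 \<le> D" "\<bar>u\<bar> \<le> sqrt D"
    using a f0 by (auto simp: D_def intro!: real_le_rsqrt)
  show "0 \<le> \<theta>" unfolding \<theta>_eq using D by linarith
  have "g + a * \<theta> = (g + b) / 2 + a * sqrt D"
    unfolding \<theta>_eq u_def using a by (simp add: field_simps)
  moreover have "0 < (g + b) / 2 + a * sqrt D"
    using a b g D by (intro add_pos_nonneg) simp_all
  ultimately show pos: "0 < g + a * \<theta>" by simp
  have "(\<theta> + u)\<^sup>2 = f0 / a + u\<^sup>2" unfolding \<theta>_eq using D by (simp add: D_def)
  then have "a * (\<theta>\<^sup>2 + 2 * u * \<theta>) = f0"
    using a by (simp add: power2_eq_square field_simps)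
  then have "f0 = a * \<theta>\<^sup>2 + (a * (2 * u)) * \<theta>" by (simp add: algebra_simps)
  also have "a * (2 * u) = g - b" unfolding u_def using a by simp
  finally show "(f0 + b * \<theta>) / (g + a * \<theta>) = \<theta>"
    using pos by (simp add: power2_eq_square field_simps)
qed

theorem theorem1:
  fixes K :: nat and f :: "nat \<Rightarrow> real" and a b :: real
  assumes "K \<ge> 1" and "\<forall>k\<le>K. f k \<ge> 0" and "0 < a" and "a < b"
  shows "(\<forall>\<theta>::real. \<theta> \<ge> 0 \<longrightarrow> Min (f ` {1..K}) + a * \<theta> > 0 \<longrightarrow>
            comp_ratio_os K f a b \<theta>
              \<le> ereal (max \<theta> (max ((f 0 + b * \<theta>) / (Min (f ` {1..K}) + a * \<theta>)) (b / a))))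
       \<and> (let \<theta>s = sqrt (f 0 / a + (Min (f ` {1..K}) - b)\<^sup>2 / (4 * a\<^sup>2))
                   - (Min (f ` {1..K}) - b) / (2 * a)
          in comp_ratio_os K f a b \<theta>s \<le> ereal (max \<theta>s (b / a)))"
proof -
  have bound: "comp_ratio_os K f a b \<theta>
      \<le> ereal (max \<theta> (max ((f 0 + b * \<theta>) / (Min (f ` {1..K}) + a * \<theta>)) (b / a)))"
    if "0 \<le> \<theta>" and "0 < Min (f ` {1..K}) + a * \<theta>" for \<theta>
    using that assms(2-4) by (intro comp_ratio_os_le)
  define \<theta>s where "\<theta>s = sqrt (f 0 / a + (Min (f ` {1..K}) - b)\<^sup>2 / (4 * a\<^sup>2))
    - (Min (f ` {1..K}) - b) / (2 * a)"
  have g: "0 \<le> Min (f ` {1..K})" using assms(1,2) by (subst Min_ge_iff) auto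
  have "0 < b" and "0 \<le> f 0" using assms(2-4) by auto
  note \<theta>s_balanced = balanced_threshold[OF assms(3) this(1) g this(2), folded \<theta>s_def]
  have "comp_ratio_os K f a b \<theta>s \<le> ereal (max \<theta>s (b / a))"
    using bound[OF \<theta>s_balanced(1,2)] unfolding \<theta>s_balanced(3) by simp
  then show ?thesis
    unfolding Let_def \<theta>s_def[symmetric] using bound by blast
qed

end
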